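(* For every integer $k\ge1$, every graphic matroid is elementarily $(3k^3,k)$-weakly base orderable.
   Context: The graphic (cycle) matroid of a graph $G$ has ground set $E(G)$ and its bases are the edge sets of maximal spanning forests (spanning trees if $G$ is connected). An ordered pair $(B_1,B_2)$ of bases has the elementary $k$-exchange property if there exist $k$-element subsets $X\subseteq B_1\setminus B_2$, $Y\subseteq B_2\setminus B_1$ and a bijection $\varphi\colon X\to Y$ such that $(B_1\setminus Z)\cup\varphi(Z)$ is a basis for every $Z\subseteq X$. A matroid is elementarily $(\alpha,k)$-weakly base orderable if every ordered pair $(B_1,B_2)$ of bases with $|B_1\setminus B_2|\ge\alpha$ has the elementary $k$-exchange property. *)

theory Defs
  imports Main
begin

text \<open>A finite multigraph (loops and parallel edges allowed) is given by a finite
edge set E and a map ends assigning to each edge its two (possibly equal) endpoints.\<close>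

definition connected_by :: "('e \<Rightarrow> 'v \<times> 'v) \<Rightarrow> 'e set \<Rightarrow> 'v \<Rightarrow> 'v \<Rightarrow> bool" where
  "connected_by ends F u v \<longleftrightarrow>
     (\<lambda>x y. \<exists>e\<in>F. ends e = (x, y) \<or> ends e = (y, x))\<^sup>*\<^sup>* u v"

text \<open>F is acyclic (a forest): no edge of F lies on a cycle of F, i.e. removing any
edge disconnects its endpoints (loops are excluded since they are cycles).\<close>
definition forest :: "('e \<Rightarrow> 'v \<times> 'v) \<Rightarrow> 'e set \<Rightarrow> bool" where
  "forest ends F \<longleftrightarrow>
     (\<forall>e\<in>F. \<not> connected_by ends (F - {e}) (fst (ends e)) (snd (ends e)))"

definition graphic_base :: "'e set \<Rightarrow> ('e \<Rightarrow> 'v \<times> 'v) \<Rightarrow> 'e set \<Rightarrow> bool" where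
  "graphic_base E ends B \<longleftrightarrow>
     B \<subseteq> E \<and> forest ends B \<and> (\<forall>e\<in>E - B. \<not> forest ends (insert e B))"

definition elementary_exchange ::
  "('e set \<Rightarrow> bool) \<Rightarrow> nat \<Rightarrow> 'e set \<Rightarrow> 'e set \<Rightarrow> bool" where
  "elementary_exchange is_base k B1 B2 \<longleftrightarrow>
     (\<exists>X Y \<phi>. X \<subseteq> B1 - B2 \<and> Y \<subseteq> B2 - B1 \<and> card X = k \<and> card Y = k \<and>
        finite X \<and> finite Y \<and> bij_betw \<phi> X Y \<and>
        (\<forall>Z\<subseteq>X. is_base ((B1 - Z) \<union> \<phi> ` Z)))"

definition elem_weakly_base_orderable ::
  "('e set \<Rightarrow> bool) \<Rightarrow> nat \<Rightarrow> nat \<Rightarrow> bool" where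
  "elem_weakly_base_orderable is_base \<alpha> k \<longleftrightarrow>
     (\<forall>B1 B2. is_base B1 \<longrightarrow> is_base B2 \<longrightarrow> card (B1 - B2) \<ge> \<alpha> \<longrightarrow>
        elementary_exchange is_base k B1 B2)"

end

theory Submission
  imports Defs
begin

text \<open>Root every component of the spanning forest B1 and attach to each edge x of B1 the
  vertex set of the subtree below x. An edge y can replace x exactly when y leaves this
  subtree, and the subtrees form a laminar family. By Mirsky's theorem, among
  (2k-1)k + 1 \<le> 3k^3 edges of B1 - B2 there are k with pairwise disjoint subtrees or 2k with
  nested subtrees. In either case, walking along B2 yields pairs (x_i, y_i) with y_i in B2 - B1
  leaving the subtree of x_i but not that of any later x_j. Performing the swaps of any subfamily
  in list order never changes the fundamental cuts of the remaining x_j, so every partial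
  exchange is again a spanning forest.\<close>

lemma chain_extend_by_maximal:
  fixes S :: "'a::order set"
  assumes "finite S" "C \<subseteq> S" "C \<noteq> {}" "\<forall>a\<in>C. \<forall>b\<in>C. a \<le> b \<or> b \<le> a"
    and no_max: "\<forall>c\<in>C. \<exists>b\<in>S. c < b"
  obtains y where "y \<in> S - C" "\<forall>a\<in>insert y C. \<forall>b\<in>insert y C. a \<le> b \<or> b \<le> a"
proof -
  obtain m where m: "m \<in> C" "\<forall>b\<in>C. m \<le> b \<longrightarrow> m = b"
    using finite_has_maximal[OF finite_subset[OF assms(2,1)] assms(3)] by blast
  have below_m: "c \<le> m" if "c \<in> C" for c
    using m assms(4) that by (metis order_refl)
  obtain y where y: "y \<in> S" "m \<le> y" "\<forall>b\<in>S. y \<le> b \<longrightarrow> y = b"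
    using finite_has_maximal2[OF assms(1)] m(1) assms(2) by blast
  have "y \<notin> C"
  proof
    assume "y \<in> C"
    then obtain b where "b \<in> S" "y < b" using no_max by blast
    then show False using y(3) by fastforce
  qed
  moreover have "\<forall>a\<in>insert y C. \<forall>b\<in>insert y C. a \<le> b \<or> b \<le> a"
    using assms(4) order.trans[OF below_m y(2)] by auto
  ultimately show thesis using that y(1) by blast
qed

lemma mirsky_antichain_or_chain:
  fixes S :: "'a::order set"
  assumes "finite S" "d * k < card S"
  shows "(\<exists>A\<subseteq>S. k \<le> card A \<and> (\<forall>a\<in>A. \<forall>b\<in>A. a \<le> b \<longrightarrow> a = b)) \<or>
         (\<exists>C\<subseteq>S. card C = Suc d \<and> (\<forall>a\<in>C. \<forall>b\<in>C. a \<le> b \<or> b \<le> a))"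
  using assms
proof (induction d arbitrary: S)
  case 0
  then obtain s where "s \<in> S" by fastforce
  then have "{s} \<subseteq> S \<and> card {s} = Suc 0 \<and> (\<forall>a\<in>{s}. \<forall>b\<in>{s}. a \<le> b \<or> b \<le> a)" by simp
  then show ?case by blast
next
  case (Suc d)
  define M where "M = {a\<in>S. \<forall>b\<in>S. a \<le> b \<longrightarrow> a = b}"
  have M: "M \<subseteq> S" "\<forall>a\<in>M. \<forall>b\<in>M. a \<le> b \<longrightarrow> a = b" by (auto simp: M_def)
  show ?case
  proof (cases "k \<le> card M")
    case True
    then show ?thesis using M by blast
  next
    case False
    have "card (S - M) = card S - card M"
      using card_Diff_subset[OF finite_subset[OF M(1) Suc.prems(1)] M(1)] .
    then have "d * k < card (S - M)" using Suc.prems(2) False by simp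
    from Suc.IH[OF _ this] Suc.prems(1)
    have "(\<exists>A\<subseteq>S - M. k \<le> card A \<and> (\<forall>a\<in>A. \<forall>b\<in>A. a \<le> b \<longrightarrow> a = b)) \<or>
        (\<exists>C\<subseteq>S - M. card C = Suc d \<and> (\<forall>a\<in>C. \<forall>b\<in>C. a \<le> b \<or> b \<le> a))" by simp
    then show ?thesis
    proof (elim disjE exE conjE)
      fix C assume C: "C \<subseteq> S - M" "card C = Suc d" "\<forall>a\<in>C. \<forall>b\<in>C. a \<le> b \<or> b \<le> a"
      have "\<forall>c\<in>C. \<exists>b\<in>S. c < b"
      proof
        fix c assume "c \<in> C"
        then have "c \<in> S" "c \<notin> M" using C(1) by auto
        then obtain b where "b \<in> S" "c \<le> b" "c \<noteq> b" unfolding M_def by blast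
        then show "\<exists>b\<in>S. c < b" using order.not_eq_order_implies_strict by blast
      qed
      moreover have "C \<subseteq> S" "C \<noteq> {}" using C(1,2) by auto
      ultimately obtain y where y: "y \<in> S - C" "\<forall>a\<in>insert y C. \<forall>b\<in>insert y C. a \<le> b \<or> b \<le> a"
        using chain_extend_by_maximal[OF Suc.prems(1) _ _ C(3)] by blast
      have "finite C" using C(2) by (simp add: card_ge_0_finite)
      with C(2) y(1) have "card (insert y C) = Suc (Suc d)" by simp
      with y \<open>C \<subseteq> S\<close> have "insert y C \<subseteq> S \<and> card (insert y C) = Suc (Suc d) \<and>
          (\<forall>a\<in>insert y C. \<forall>b\<in>insert y C. a \<le> b \<or> b \<le> a)" by blast
      then show ?thesis by blast
    next
      fix A assume "A \<subseteq> S - M" "k \<le> card A" "\<forall>a\<in>A. \<forall>b\<in>A. a \<le> b \<longrightarrow> a = b"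
      then show ?thesis by blast
    qed
  qed
qed

lemma finite_chain_has_greatest:
  fixes f :: "'a \<Rightarrow> 'b::order"
  assumes "finite C" "C \<noteq> {}" "\<forall>x\<in>C. \<forall>y\<in>C. f x \<le> f y \<or> f y \<le> f x"
  obtains m where "m \<in> C" "\<forall>x\<in>C. f x \<le> f m"
proof -
  obtain M where M: "M \<in> f ` C" "\<forall>b\<in>f ` C. M \<le> b \<longrightarrow> M = b"
    using finite_has_maximal[of "f ` C"] assms(1,2) by blast
  then obtain m where "m \<in> C" "M = f m" by blast
  moreover have "f x \<le> f m" if "x \<in> C" for x
    using assms(3) M(2) that \<open>m \<in> C\<close> \<open>M = f m\<close> by (metis image_eqI order_refl)
  ultimately show thesis using that by blast
qed

fun triangular :: "('a \<Rightarrow> 'b \<Rightarrow> bool) \<Rightarrow> ('a \<times> 'b) list \<Rightarrow> bool" where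
  "triangular R [] \<longleftrightarrow> True"
| "triangular R ((x, y) # ps) \<longleftrightarrow> R x y \<and> (\<forall>(x', _)\<in>set ps. \<not> R x' y) \<and> triangular R ps"

lemma triangular_diagonal: "triangular R ps \<Longrightarrow> (x, y) \<in> set ps \<Longrightarrow> R x y"
  by (induction R ps rule: triangular.induct) auto

lemma triangular_distinct:
  "triangular R ps \<Longrightarrow> distinct (map fst ps) \<and> distinct (map snd ps)"
proof (induction R ps rule: triangular.induct)
  case (2 R x y ps)
  then have "x \<notin> fst ` set ps" "y \<notin> snd ` set ps"
    using triangular_diagonal[of R ps] by fastforce+
  with 2 show ?case by auto
qed simp

lemma triangular_take: "triangular R ps \<Longrightarrow> triangular R (take n ps)"
  by (induction R ps arbitrary: n rule: triangular.induct)
    (auto simp: take_Cons' dest: in_set_takeD)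

lemma triangular_snoc:
  "triangular R ps \<Longrightarrow> R x y \<Longrightarrow> \<forall>(x', y')\<in>set ps. \<not> R x y' \<Longrightarrow> triangular R (ps @ [(x, y)])"
  by (induction R ps rule: triangular.induct) auto

lemma triangular_cong:
  assumes "\<And>x y. x \<in> fst ` set ps \<Longrightarrow> y \<in> snd ` set ps \<Longrightarrow> R x y = R' x y"
  shows "triangular R ps = triangular R' ps"
  using assms
proof (induction ps)
  case (Cons p ps)
  obtain x y where p: "p = (x, y)" by fastforce
  have "triangular R ps = triangular R' ps"
    by (rule Cons.IH) (rule Cons.prems; simp)
  moreover have "R x y = R' x y"
    by (rule Cons.prems) (simp_all add: p)
  moreover have "R x' y = R' x' y" if "(x', y') \<in> set ps" for x' y'
    by (rule Cons.prems) (use that p in force)+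
  then have "(\<forall>(x', _)\<in>set ps. \<not> R x' y) = (\<forall>(x', _)\<in>set ps. \<not> R' x' y)"
    by fastforce
  ultimately show ?case using p by simp
qed simp

context
  fixes ends :: "'e \<Rightarrow> 'v \<times> 'v"
begin

lemma connected_by_refl [simp]: "connected_by ends F u u"
  by (simp add: connected_by_def)

lemma connected_by_trans:
  "connected_by ends F u v \<Longrightarrow> connected_by ends F v w \<Longrightarrow> connected_by ends F u w"
  unfolding connected_by_def by (rule rtranclp_trans)

lemma connected_by_sym: "connected_by ends F u v \<Longrightarrow> connected_by ends F v u"
  unfolding connected_by_def
proof (induction rule: rtranclp_induct)
  case (step v w)
  then show ?case by (blast intro: converse_rtranclp_into_rtranclp)
qed simp

lemma connected_by_edge: "e \<in> F \<Longrightarrow> connected_by ends F (fst (ends e)) (snd (ends e))"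
  unfolding connected_by_def by (rule r_into_rtranclp) auto

lemma connected_by_mono: "F \<subseteq> G \<Longrightarrow> connected_by ends F u v \<Longrightarrow> connected_by ends G u v"
  unfolding connected_by_def by (erule rtranclp_mono[THEN predicate2D, rotated]) blast

lemma connected_by_insert_cases:
  assumes "connected_by ends (insert e F) u v"
  shows "connected_by ends F u v \<or>
    (connected_by ends F u (fst (ends e)) \<and> connected_by ends F (snd (ends e)) v) \<or>
    (connected_by ends F u (snd (ends e)) \<and> connected_by ends F (fst (ends e)) v)"
  using assms unfolding connected_by_def
proof (induction rule: rtranclp_induct)
  case (step w v)
  then obtain g where g: "g \<in> insert e F" "ends g = (w, v) \<or> ends g = (v, w)" by blast
  show ?case
  proof (cases "g \<in> F")
    case True
    then have "connected_by ends F w v"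
      using g(2) connected_by_edge connected_by_sym by fastforce
    with step.IH show ?thesis
      unfolding connected_by_def[symmetric] using connected_by_trans by blast
  next
    case False
    with g have "ends e = (w, v) \<or> ends e = (v, w)" by auto
    with step.IH show ?thesis unfolding connected_by_def[symmetric] by auto
  qed
qed simp

lemma connected_by_insert_iff:
  assumes "connected_by ends F (fst (ends e)) (snd (ends e))"
  shows "connected_by ends (insert e F) u v \<longleftrightarrow> connected_by ends F u v"
proof
  assume "connected_by ends (insert e F) u v"
  from connected_by_insert_cases[OF this] show "connected_by ends F u v"
    using assms connected_by_trans connected_by_sym by meson
qed (erule connected_by_mono[rotated], blast)

text \<open>The path in insert e F joining the endpoints of y must pass through e.\<close>
lemma connected_by_exchange:
  assumes "connected_by ends (insert e F) (fst (ends y)) (snd (ends y))"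
    and "\<not> connected_by ends F (fst (ends y)) (snd (ends y))"
  shows "connected_by ends (insert y F) (fst (ends e)) (snd (ends e))"
proof -
  have y: "connected_by ends (insert y F) (fst (ends y)) (snd (ends y))"
    by (rule connected_by_edge) simp
  have sub: "connected_by ends F u v \<Longrightarrow> connected_by ends (insert y F) u v" for u v
    by (rule connected_by_mono[of F]) auto
  from connected_by_insert_cases[OF assms(1)] assms(2) show ?thesis
    using sub y connected_by_trans connected_by_sym by meson
qed

definition endpoints :: "'e \<Rightarrow> 'v set" where
  "endpoints y = {fst (ends y), snd (ends y)}"

definition crosses :: "'e \<Rightarrow> 'v set \<Rightarrow> bool" where
  "crosses y U \<longleftrightarrow> (fst (ends y) \<in> U) \<noteq> (snd (ends y) \<in> U)"

lemma crosses_iff_endpoints: "crosses y U \<longleftrightarrow> endpoints y \<inter> U \<noteq> {} \<and> \<not> endpoints y \<subseteq> U"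
  unfolding crosses_def endpoints_def by auto

lemma crossesE:
  assumes "crosses y U"
  obtains u w where "endpoints y = {u, w}" "u \<in> U" "w \<notin> U"
  using assms unfolding crosses_def endpoints_def by auto

lemma connected_by_crossing:
  assumes "connected_by ends F u v" "u \<in> U" "v \<notin> U"
  shows "\<exists>f\<in>F. crosses f U"
proof -
  have "v \<in> U \<or> (\<exists>f\<in>F. crosses f U)"
    using assms(1) unfolding connected_by_def
  proof (induction rule: rtranclp_induct)
    case (step w v)
    then show ?case unfolding crosses_def by force
  qed (use assms(2) in simp)
  with assms(3) show ?thesis by blast
qed

lemma connected_by_crossing_edge:
  assumes "connected_by ends F (fst (ends e)) (snd (ends e))" "crosses e U"
  shows "\<exists>f\<in>F. crosses f U"
  using assms connected_by_crossing connected_by_sym unfolding crosses_def by metis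

definition component :: "'e set \<Rightarrow> 'v \<Rightarrow> 'v set" where
  "component F v = {w. connected_by ends F v w}"

lemma mem_component [simp]: "w \<in> component F v \<longleftrightarrow> connected_by ends F v w"
  by (simp add: component_def)

lemma component_mono: "F \<subseteq> G \<Longrightarrow> component F v \<subseteq> component G v"
  using connected_by_mono by auto

lemma component_eq: "connected_by ends F v w \<Longrightarrow> component F v = component F w"
  unfolding component_def using connected_by_trans connected_by_sym by blast

lemma connected_by_component_iff:
  "connected_by ends F u u' \<Longrightarrow> u \<in> component F v \<longleftrightarrow> u' \<in> component F v"
  unfolding component_def using connected_by_trans connected_by_sym by blast

lemma component_eq_or_disjoint:
  "component F u = component F v \<or> component F u \<inter> component F v = {}"
proof (cases "connected_by ends F u v")
  case True
  then show ?thesis using component_eq[OF True] by blast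
next
  case False
  have "connected_by ends F u v" if "connected_by ends F u w" "connected_by ends F v w" for w
    using connected_by_trans[OF that(1) connected_by_sym[OF that(2)]] .
  with False have "component F u \<inter> component F v = {}" by auto
  then show ?thesis ..
qed

lemma component_Diff_edge:
  assumes e: "e \<in> F" and out: "fst (ends e) \<notin> component F v"
  shows "component (F - {e}) v = component F v"
proof
  show "component (F - {e}) v \<subseteq> component F v"
    by (rule component_mono) blast
  have "snd (ends e) \<notin> component F v"
    using out connected_by_component_iff[OF connected_by_edge[OF e]] by simp
  with out have outs: "\<not> connected_by ends (F - {e}) v (fst (ends e))"
    "\<not> connected_by ends (F - {e}) v (snd (ends e))"
    using connected_by_mono[OF Diff_subset] by auto
  show "component F v \<subseteq> component (F - {e}) v"
  proof
    fix w assume "w \<in> component F v"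
    then have "connected_by ends (insert e (F - {e})) v w"
      using e by (simp add: insert_absorb)
    from connected_by_insert_cases[OF this] outs show "w \<in> component (F - {e}) v" by auto
  qed
qed

lemma crosses_component_not_connected:
  "crosses y (component F v) \<Longrightarrow> \<not> connected_by ends F (fst (ends y)) (snd (ends y))"
  using connected_by_component_iff unfolding crosses_def by blast

lemma not_crosses_component: "f \<in> F \<Longrightarrow> \<not> crosses f (component F v)"
  using crosses_component_not_connected connected_by_edge by blast

lemma forest_subset: "forest ends F \<Longrightarrow> G \<subseteq> F \<Longrightarrow> forest ends G"
  unfolding forest_def by (meson Diff_mono connected_by_mono order_refl subsetD)

lemma forest_insert_iff:
  assumes "e \<notin> F"
  shows "forest ends (insert e F) \<longleftrightarrow>
    forest ends F \<and> \<not> connected_by ends F (fst (ends e)) (snd (ends e))"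
proof
  assume "forest ends (insert e F)"
  then show "forest ends F \<and> \<not> connected_by ends F (fst (ends e)) (snd (ends e))"
    using assms forest_subset unfolding forest_def by (metis Diff_insert_absorb insertI1 subset_insertI)
next
  assume F: "forest ends F \<and> \<not> connected_by ends F (fst (ends e)) (snd (ends e))"
  show "forest ends (insert e F)"
    unfolding forest_def
  proof
    fix f assume f: "f \<in> insert e F"
    show "\<not> connected_by ends (insert e F - {f}) (fst (ends f)) (snd (ends f))"
    proof (cases "f = e")
      case True
      then show ?thesis using F assms by simp
    next
      case False
      then have "f \<in> F" "insert e F - {f} = insert e (F - {f})" using f by auto
      moreover have "\<not> connected_by ends (F - {f}) (fst (ends f)) (snd (ends f))"
        using F \<open>f \<in> F\<close> unfolding forest_def by blast
      moreover have "\<not> connected_by ends (insert f (F - {f})) (fst (ends e)) (snd (ends e))"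
        using F \<open>f \<in> F\<close> by (simp add: insert_absorb)
      ultimately show ?thesis using connected_by_exchange[of e "F - {f}" f] by auto
    qed
  qed
qed

lemma graphic_base_iff:
  "graphic_base E ends B \<longleftrightarrow>
    B \<subseteq> E \<and> forest ends B \<and> (\<forall>e\<in>E. connected_by ends B (fst (ends e)) (snd (ends e)))"
proof -
  have iff: "\<not> forest ends (insert e B) \<longleftrightarrow> connected_by ends B (fst (ends e)) (snd (ends e))"
    if "forest ends B" "e \<notin> B" for e
    using forest_insert_iff[OF that(2)] that(1) by simp
  have "(\<forall>e\<in>E - B. \<not> forest ends (insert e B)) \<longleftrightarrow>
      (\<forall>e\<in>E. connected_by ends B (fst (ends e)) (snd (ends e)))" if B: "forest ends B"
  proof (intro iffI ballI)
    fix e assume max: "\<forall>e\<in>E - B. \<not> forest ends (insert e B)" and "e \<in> E"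
    show "connected_by ends B (fst (ends e)) (snd (ends e))"
    proof (cases "e \<in> B")
      case False
      with max \<open>e \<in> E\<close> iff[OF B False] show ?thesis by blast
    qed (rule connected_by_edge)
  next
    fix e assume "\<forall>e\<in>E. connected_by ends B (fst (ends e)) (snd (ends e))" "e \<in> E - B"
    then show "\<not> forest ends (insert e B)" using iff[OF B] by blast
  qed
  then show ?thesis unfolding graphic_base_def by blast
qed

lemma graphic_base_connected:
  "graphic_base E ends B \<Longrightarrow> e \<in> E \<Longrightarrow> connected_by ends B (fst (ends e)) (snd (ends e))"
  unfolding graphic_base_iff by blast

definition side :: "'e set \<Rightarrow> 'e \<Rightarrow> 'v set" where
  "side B x = component (B - {x}) (fst (ends x))"

lemma connected_by_other_side:
  assumes "x \<in> B" "connected_by ends B (fst (ends x)) v" "v \<notin> side B x"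
  shows "connected_by ends (B - {x}) (snd (ends x)) v"
proof -
  have "connected_by ends (insert x (B - {x})) (fst (ends x)) v"
    using assms(1,2) by (simp add: insert_absorb)
  from connected_by_insert_cases[OF this] assms(3) show ?thesis
    unfolding side_def component_def using connected_by_trans by blast
qed

lemma connected_by_remove_non_crossing:
  assumes "x \<in> B" "connected_by ends B (fst (ends y)) (snd (ends y))" "\<not> crosses y (side B x)"
  shows "connected_by ends (B - {x}) (fst (ends y)) (snd (ends y))"
proof -
  have "connected_by ends (insert x (B - {x})) (fst (ends y)) (snd (ends y))"
    using assms(1,2) by (simp add: insert_absorb)
  moreover have "connected_by ends (B - {x}) (fst (ends x)) (fst (ends y)) \<longleftrightarrow>
      connected_by ends (B - {x}) (fst (ends x)) (snd (ends y))"
    using assms(3) unfolding crosses_def side_def component_def by simp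
  ultimately show ?thesis
    using connected_by_insert_cases connected_by_trans connected_by_sym by metis
qed

lemma crosses_side_not_connected:
  "crosses y (side B x) \<Longrightarrow> \<not> connected_by ends (B - {x}) (fst (ends y)) (snd (ends y))"
  unfolding side_def by (rule crosses_component_not_connected)

lemma graphic_base_exchange:
  assumes B: "graphic_base E ends B" and x: "x \<in> B" and y: "y \<in> E - B"
    and cr: "crosses y (side B x)"
  shows "graphic_base E ends (insert y (B - {x}))"
  unfolding graphic_base_iff
proof (intro conjI ballI)
  have nc: "\<not> connected_by ends (B - {x}) (fst (ends y)) (snd (ends y))"
    using crosses_side_not_connected[OF cr] .
  show "insert y (B - {x}) \<subseteq> E" using B y unfolding graphic_base_iff by blast
  have "forest ends (B - {x})"
    using B forest_subset unfolding graphic_base_iff by blast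
  moreover have "y \<notin> B - {x}" using y by blast
  ultimately show "forest ends (insert y (B - {x}))"
    using nc by (simp add: forest_insert_iff)
  have "connected_by ends (insert x (B - {x})) (fst (ends y)) (snd (ends y))"
    using graphic_base_connected[OF B] x y by (simp add: insert_absorb)
  then have "connected_by ends (insert y (B - {x})) (fst (ends x)) (snd (ends x))"
    using connected_by_exchange[OF _ nc] by blast
  note x_redundant = connected_by_insert_iff[OF this]
  fix e assume "e \<in> E"
  have "connected_by ends (insert x (insert y (B - {x}))) (fst (ends e)) (snd (ends e))"
    by (rule connected_by_mono[OF _ graphic_base_connected[OF B \<open>e \<in> E\<close>]]) blast
  then show "connected_by ends (insert y (B - {x})) (fst (ends e)) (snd (ends e))"
    unfolding x_redundant .
qed

lemma side_exchange:
  assumes B: "graphic_base E ends B" and x0: "x0 \<in> B" and y: "y \<in> E - B"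
    and cr: "crosses y (side B x0)"
    and x: "x \<in> B" "x \<noteq> x0" and ncr: "\<not> crosses y (side B x)"
  shows "side (insert y (B - {x0})) x = side B x"
proof -
  define F where "F = B - {x} - {x0}"
  have F: "insert x0 F = B - {x}" "insert y F = insert y (B - {x0}) - {x}"
    using x0 x y unfolding F_def by auto
  have y_ends: "connected_by ends (insert x0 F) (fst (ends y)) (snd (ends y))"
    using connected_by_remove_non_crossing[OF x(1) graphic_base_connected[OF B] ncr] y F(1) by simp
  have "\<not> connected_by ends F (fst (ends y)) (snd (ends y))"
  proof
    assume "connected_by ends F (fst (ends y)) (snd (ends y))"
    then have "connected_by ends (B - {x0}) (fst (ends y)) (snd (ends y))"
      by (rule connected_by_mono[rotated]) (auto simp: F_def)
    with crosses_side_not_connected[OF cr] show False by contradiction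
  qed
  with y_ends have x0_ends: "connected_by ends (insert y F) (fst (ends x0)) (snd (ends x0))"
    by (rule connected_by_exchange)
  have "connected_by ends (insert y F) u v \<longleftrightarrow> connected_by ends (insert x0 F) u v" for u v
  proof -
    have "connected_by ends (insert y F) u v \<longleftrightarrow> connected_by ends (insert x0 (insert y F)) u v"
      using connected_by_insert_iff[OF x0_ends] by simp
    also have "\<dots> \<longleftrightarrow> connected_by ends (insert y (insert x0 F)) u v"
      by (simp add: insert_commute)
    also have "\<dots> \<longleftrightarrow> connected_by ends (insert x0 F) u v"
      using connected_by_insert_iff[OF y_ends] .
    finally show ?thesis .
  qed
  then show ?thesis unfolding side_def component_def F(1)[symmetric] F(2)[symmetric]
    by (intro Collect_cong) simp
qed

text \<open>Swapping the first pair leaves the sides of all later x unchanged (side_exchange),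
  so the rest of the list is still triangular with respect to the new base.\<close>
lemma graphic_base_triangular_exchange:
  assumes "graphic_base E ends B" "triangular (\<lambda>x y. crosses y (side B x)) ps"
    and "set ps \<subseteq> B \<times> (E - B)" "\<forall>(x, y)\<in>set ps. \<phi> x = y" "Z \<subseteq> fst ` set ps"
  shows "graphic_base E ends (B - Z \<union> \<phi> ` Z)"
  using assms
proof (induction ps arbitrary: B Z)
  case (Cons p ps)
  obtain x y where p: "p = (x, y)" by fastforce
  have cr: "crosses y (side B x)"
    and later: "\<forall>(x', _)\<in>set ps. \<not> crosses y (side B x')"
    and tri: "triangular (\<lambda>x y. crosses y (side B x)) ps"
    using Cons.prems(2) p by auto
  have xy: "x \<in> B" "y \<in> E - B" "\<phi> x = y" and ps: "set ps \<subseteq> B \<times> (E - B)"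
    using Cons.prems(3,4) p by auto
  have fresh: "x \<notin> fst ` set ps" "y \<notin> snd ` set ps"
    using triangular_distinct[OF Cons.prems(2)] p by auto
  show ?case
  proof (cases "x \<in> Z")
    case False
    then have "Z \<subseteq> fst ` set ps" using Cons.prems(5) p by auto
    with Cons.IH[OF Cons.prems(1) tri ps] Cons.prems(4) show ?thesis by simp
  next
    case True
    define B' where "B' = insert y (B - {x})"
    have B': "graphic_base E ends B'"
      unfolding B'_def using graphic_base_exchange[OF Cons.prems(1) xy(1,2) cr] .
    have "side B' x' = side B x'" if "x' \<in> fst ` set ps" for x'
      unfolding B'_def using side_exchange[OF Cons.prems(1) xy(1,2) cr] that ps fresh(1) later
      by fastforce
    then have "triangular (\<lambda>x y. crosses y (side B' x)) ps"
      using tri triangular_cong[of ps "\<lambda>x y. crosses y (side B' x)"] by simp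
    moreover have "set ps \<subseteq> B' \<times> (E - B')"
      unfolding B'_def using ps fresh by force
    moreover have "Z - {x} \<subseteq> fst ` set ps" using Cons.prems(5) p by auto
    ultimately have "graphic_base E ends (B' - (Z - {x}) \<union> \<phi> ` (Z - {x}))"
      using Cons.IH[OF B'] Cons.prems(4) by simp
    moreover have "Z \<subseteq> B" using Cons.prems(3,5) by fastforce
    then have "B' - (Z - {x}) \<union> \<phi> ` (Z - {x}) = B - Z \<union> \<phi> ` Z"
      using True xy unfolding B'_def by auto
    ultimately show ?thesis by simp
  qed
qed simp

lemma component_snd_Diff_edge:
  assumes F: "forest ends F" and x: "x \<in> F"
  shows "component (F - {x}) (snd (ends x)) = component F (fst (ends x)) - side F x"
proof (intro equalityI subsetI)
  fix w assume "w \<in> component (F - {x}) (snd (ends x))"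
  then have w: "connected_by ends (F - {x}) (snd (ends x)) w" by simp
  have "connected_by ends F (fst (ends x)) w"
    using connected_by_trans[OF connected_by_edge[OF x] connected_by_mono[OF Diff_subset w]] .
  moreover have "w \<notin> side F x"
  proof
    assume "w \<in> side F x"
    then have "connected_by ends (F - {x}) (fst (ends x)) w" by (simp add: side_def)
    from connected_by_trans[OF this connected_by_sym[OF w]] show False
      using F x unfolding forest_def by blast
  qed
  ultimately show "w \<in> component F (fst (ends x)) - side F x" by simp
next
  fix w assume "w \<in> component F (fst (ends x)) - side F x"
  then show "w \<in> component (F - {x}) (snd (ends x))"
    using connected_by_other_side[OF x] by simp
qed



end

text \<open>Each component of the forest F is rooted at a chosen vertex. Removing an edge x of F
  cuts off the subtree below x: the side of x not containing the root.\<close>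
locale rooted_forest =
  fixes ends :: "'e \<Rightarrow> 'v \<times> 'v" and F :: "'e set"
  assumes forest: "forest ends F"
begin

definition root :: "'v \<Rightarrow> 'v" where
  "root v = (SOME w. w \<in> component ends F v)"

definition near_end :: "'e \<Rightarrow> 'v" where
  "near_end x = (if root (fst (ends x)) \<in> side ends F x then fst (ends x) else snd (ends x))"

definition far_end :: "'e \<Rightarrow> 'v" where
  "far_end x = (if root (fst (ends x)) \<in> side ends F x then snd (ends x) else fst (ends x))"

definition subtree :: "'e \<Rightarrow> 'v set" where
  "subtree x = component ends (F - {x}) (far_end x)"

lemma root_connected: "connected_by ends F v (root v)"
proof -
  have "root v \<in> component ends F v"
    unfolding root_def by (rule someI[of _ v]) (simp add: component_def)
  then show ?thesis by (simp add: component_def)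
qed

lemma root_eq: "connected_by ends F v w \<Longrightarrow> root v = root w"
  unfolding root_def using component_eq[of ends F v w] by simp

lemma near_far_cases:
  "near_end x = fst (ends x) \<and> far_end x = snd (ends x) \<or>
   near_end x = snd (ends x) \<and> far_end x = fst (ends x)"
  unfolding near_end_def far_end_def by auto

lemma near_far_not_connected:
  assumes "x \<in> F"
  shows "\<not> connected_by ends (F - {x}) (near_end x) (far_end x)"
proof -
  have "\<not> connected_by ends (F - {x}) (fst (ends x)) (snd (ends x))"
    using forest assms unfolding forest_def by blast
  then show ?thesis
    using near_far_cases[of x] connected_by_sym[of ends "F - {x}" "snd (ends x)" "fst (ends x)"] by auto
qed

lemma far_end_in_subtree: "far_end x \<in> subtree x"
  unfolding subtree_def component_def by simp

lemma near_end_notin_subtree: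
  assumes "x \<in> F"
  shows "near_end x \<notin> subtree x"
proof
  assume "near_end x \<in> subtree x"
  then have "connected_by ends (F - {x}) (far_end x) (near_end x)"
    by (simp add: subtree_def component_def)
  from connected_by_sym[OF this] near_far_not_connected[OF assms] show False by contradiction
qed

lemma crosses_subtree: "x \<in> F \<Longrightarrow> crosses ends x (subtree x)"
  using far_end_in_subtree[of x] near_end_notin_subtree[of x] near_far_cases[of x]
  unfolding crosses_def by auto

lemma crosses_subtree_imp_eq:
  assumes "f \<in> F" "crosses ends f (subtree x)"
  shows "f = x"
proof (rule ccontr)
  assume "f \<noteq> x"
  with assms(1) have "f \<in> F - {x}" by blast
  then have "\<not> crosses ends f (component ends (F - {x}) (far_end x))"
    by (rule not_crosses_component)
  with assms(2) show False unfolding subtree_def by contradiction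
qed

lemma inj_on_subtree: "inj_on subtree F"
proof (rule inj_onI)
  fix x x' assume x: "x \<in> F" and "x' \<in> F" "subtree x = subtree x'"
  then have "crosses ends x (subtree x')" using crosses_subtree[OF x] by simp
  then show "x = x'" by (rule crosses_subtree_imp_eq[OF x])
qed

lemma near_end_connected_root:
  assumes "x \<in> F"
  shows "connected_by ends (F - {x}) (near_end x) (root (fst (ends x)))"
proof (cases "root (fst (ends x)) \<in> side ends F x")
  case True
  then show ?thesis unfolding near_end_def side_def component_def by simp
next
  case False
  with connected_by_other_side[OF assms root_connected] show ?thesis
    unfolding near_end_def by simp
qed

lemma root_notin_subtree:
  assumes "x \<in> F"
  shows "root (fst (ends x)) \<notin> subtree x"
proof
  assume "root (fst (ends x)) \<in> subtree x"
  then have "connected_by ends (F - {x}) (far_end x) (root (fst (ends x)))"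
    by (simp add: subtree_def component_def)
  from connected_by_trans[OF near_end_connected_root[OF assms] connected_by_sym[OF this]]
  show False using near_far_not_connected[OF assms] by contradiction
qed

lemma subtree_connected: "x \<in> F \<Longrightarrow> w \<in> subtree x \<Longrightarrow> connected_by ends F (fst (ends x)) w"
proof -
  assume x: "x \<in> F" and "w \<in> subtree x"
  then have "connected_by ends (F - {x}) (far_end x) w"
    by (simp add: subtree_def component_def)
  then have "connected_by ends F (far_end x) w"
    by (rule connected_by_mono[OF Diff_subset])
  moreover have "connected_by ends F (fst (ends x)) (far_end x)"
    using near_far_cases[of x] connected_by_edge[OF x] by auto
  ultimately show ?thesis by (rule connected_by_trans[rotated])
qed

text \<open>No endpoint of x' lies in the subtree of x, so removing x' does not split it.\<close>
lemma subtree_subset_or_disjoint: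
  assumes x: "x \<in> F" and x': "x' \<in> F" "x \<noteq> x'" and out: "fst (ends x') \<notin> subtree x"
  shows "subtree x \<subseteq> subtree x' \<or> subtree x \<inter> subtree x' = {}"
proof -
  have "x' \<in> F - {x}" using x' by blast
  from component_Diff_edge[OF this out[unfolded subtree_def]]
  have "subtree x = component ends (F - {x} - {x'}) (far_end x)"
    unfolding subtree_def by simp
  also have "\<dots> \<subseteq> component ends (F - {x'}) (far_end x)"
    by (rule component_mono) blast
  finally show ?thesis
    using component_eq_or_disjoint[of ends "F - {x'}" "far_end x" "far_end x'"]
    unfolding subtree_def by blast
qed

text \<open>Otherwise the path from near_end x to the root avoids both x and x', which would put
  the root into the subtree of x'.\<close>
lemma subtrees_not_interlocked:
  assumes x: "x \<in> F" and x': "x' \<in> F" "x \<noteq> x'"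
    and in_x: "fst (ends x') \<in> subtree x" and in_x': "fst (ends x) \<in> subtree x'"
  shows False
proof -
  define r where "r = root (fst (ends x))"
  have "r = root (fst (ends x'))"
    unfolding r_def using root_eq[OF subtree_connected[OF x in_x]] .
  then have r_out: "r \<notin> subtree x'" using root_notin_subtree[OF x'(1)] by simp
  have "x \<in> F - {x'}" using x x' by blast
  from connected_by_component_iff[OF connected_by_edge[where ends = ends, OF this]] in_x'
  have "snd (ends x) \<in> subtree x'" unfolding subtree_def by simp
  with in_x' have near_in: "near_end x \<in> subtree x'"
    using near_far_cases[of x] by auto
  have "fst (ends x') \<notin> component ends (F - {x}) (near_end x)"
  proof
    assume "fst (ends x') \<in> component ends (F - {x}) (near_end x)"
    moreover have "connected_by ends (F - {x}) (far_end x) (fst (ends x'))"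
      using in_x by (simp add: subtree_def)
    ultimately have "connected_by ends (F - {x}) (near_end x) (far_end x)"
      using connected_by_trans connected_by_sym by (metis mem_component)
    with near_far_not_connected[OF x] show False by contradiction
  qed
  moreover have "x' \<in> F - {x}" using x' by blast
  ultimately have "component ends (F - {x} - {x'}) (near_end x) = component ends (F - {x}) (near_end x)"
    by (intro component_Diff_edge)
  moreover have "r \<in> component ends (F - {x}) (near_end x)"
    using near_end_connected_root[OF x] unfolding r_def by simp
  moreover have "component ends (F - {x} - {x'}) (near_end x) \<subseteq> component ends (F - {x'}) (near_end x)"
    by (rule component_mono) blast
  ultimately have "connected_by ends (F - {x'}) (near_end x) r" by auto
  moreover have "connected_by ends (F - {x'}) (far_end x') (near_end x)"
    using near_in by (simp add: subtree_def)
  ultimately have "r \<in> subtree x'"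
    unfolding subtree_def mem_component by (rule connected_by_trans[rotated])
  with r_out show False by contradiction
qed

lemma subtree_laminar:
  assumes "x \<in> F" "x' \<in> F"
  shows "subtree x \<subseteq> subtree x' \<or> subtree x' \<subseteq> subtree x \<or> subtree x \<inter> subtree x' = {}"
proof (cases "x = x'")
  case False
  then show ?thesis
    using subtree_subset_or_disjoint[OF assms] subtree_subset_or_disjoint[OF assms(2,1)]
      subtrees_not_interlocked[OF assms] by blast
qed simp

lemma crosses_subtree_iff_crosses_side:
  assumes x: "x \<in> F" and y: "connected_by ends F (fst (ends y)) (snd (ends y))"
  shows "crosses ends y (subtree x) \<longleftrightarrow> crosses ends y (side ends F x)"
proof (cases "far_end x = fst (ends x)")
  case True
  then show ?thesis by (simp add: subtree_def side_def)
next
  case False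
  define C where "C = component ends F (fst (ends x))"
  have "far_end x = snd (ends x)" using False near_far_cases[of x] by auto
  then have "subtree x = C - side ends F x"
    unfolding subtree_def C_def using component_snd_Diff_edge[OF forest x] by simp
  moreover have "side ends F x \<subseteq> C"
    unfolding side_def C_def by (rule component_mono) blast
  moreover have "fst (ends y) \<in> C \<longleftrightarrow> snd (ends y) \<in> C"
    unfolding C_def by (rule connected_by_component_iff[OF y])
  ultimately show ?thesis unfolding crosses_def by blast
qed

end

locale graphic_base_pair =
  fixes ends :: "'e \<Rightarrow> 'v \<times> 'v" and E B1 B2 :: "'e set"
  assumes finite_E: "finite E"
    and base1: "graphic_base E ends B1" and base2: "graphic_base E ends B2"
begin

sublocale rooted_forest ends B1
  using base1 by unfold_locales (simp add: graphic_base_iff)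

text \<open>For y outside B1 this says that B1 - {x} \<union> {y} is again a base, i.e. y lies in the
  fundamental cocircuit of x.\<close>
abbreviation in_fundamental_cut :: "'e \<Rightarrow> 'e \<Rightarrow> bool" where
  "in_fundamental_cut x y \<equiv> crosses ends y (subtree x)"

lemma B1_subset: "B1 \<subseteq> E" and B2_subset: "B2 \<subseteq> E"
  using base1 base2 by (simp_all add: graphic_base_iff)

lemma B2_edge_crossing:
  assumes "x \<in> B1" "crosses ends x U"
  obtains f where "f \<in> B2" "crosses ends f U"
proof -
  have "connected_by ends B2 (fst (ends x)) (snd (ends x))"
    using graphic_base_connected[OF base2] assms(1) B1_subset by blast
  from connected_by_crossing_edge[OF this assms(2)] that show thesis by blast
qed

lemma crosses_subtree_notin_B1:
  assumes "f \<in> B2" "x \<in> B1 - B2" "in_fundamental_cut x f"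
  shows "f \<notin> B1"
proof
  assume "f \<in> B1"
  from crosses_subtree_imp_eq[OF this assms(3)] assms(1,2) show False by blast
qed

lemma exists_edge_leaving_disjoint_subtrees:
  assumes A: "A \<subseteq> B1 - B2" "A \<noteq> {}"
    and disj: "\<forall>x\<in>A. \<forall>x'\<in>A. x \<noteq> x' \<longrightarrow> subtree x \<inter> subtree x' = {}"
  obtains a f where "a \<in> A" "f \<in> B2 - B1" "in_fundamental_cut a f"
    "\<forall>x\<in>A - {a}. endpoints ends f \<inter> subtree x = {}"
proof -
  define U where "U = \<Union>(subtree ` A)"
  obtain x0 where x0: "x0 \<in> A" using A(2) by blast
  then have x0B: "x0 \<in> B1" using A(1) by blast
  have "near_end x0 \<notin> U"
  proof
    assume "near_end x0 \<in> U"
    then obtain a where a: "a \<in> A" "near_end x0 \<in> subtree a" unfolding U_def by blast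
    with near_end_notin_subtree[OF x0B] have "a \<noteq> x0" by blast
    with disj a(1) x0 far_end_in_subtree[of x0] have "far_end x0 \<notin> subtree a" by blast
    with a(2) have "crosses ends x0 (subtree a)"
      using near_far_cases[of x0] unfolding crosses_def by auto
    with crosses_subtree_imp_eq[OF x0B] \<open>a \<noteq> x0\<close> show False by blast
  qed
  moreover have "far_end x0 \<in> U" unfolding U_def using x0 far_end_in_subtree by blast
  ultimately have "crosses ends x0 U" using near_far_cases[of x0] unfolding crosses_def by auto
  with x0B obtain f where f: "f \<in> B2" "crosses ends f U" by (rule B2_edge_crossing)
  from f(2) obtain u w where uw: "endpoints ends f = {u, w}" "u \<in> U" "w \<notin> U"
    by (rule crossesE)
  then obtain a where a: "a \<in> A" "u \<in> subtree a" unfolding U_def by blast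
  have cut: "in_fundamental_cut a f"
    using uw a unfolding U_def crosses_iff_endpoints by blast
  moreover have "f \<notin> B1" using crosses_subtree_notin_B1[OF f(1) _ cut] a(1) A(1) by blast
  moreover have "endpoints ends f \<inter> subtree x = {}" if "x \<in> A - {a}" for x
  proof -
    have "u \<notin> subtree x" using a disj that by blast
    moreover have "w \<notin> subtree x" using uw(3) that unfolding U_def by blast
    ultimately show ?thesis using uw(1) by auto
  qed
  ultimately show thesis using that a(1) f(1) by blast
qed

lemma triangular_list_of_disjoint_subtrees:
  assumes "finite A" "A \<subseteq> B1 - B2" "\<forall>x\<in>A. \<forall>x'\<in>A. x \<noteq> x' \<longrightarrow> subtree x \<inter> subtree x' = {}"
  shows "\<exists>ps. triangular in_fundamental_cut ps \<and> length ps = card A \<and> set ps \<subseteq> A \<times> (B2 - B1)"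
  using assms
proof (induction "card A" arbitrary: A)
  case 0
  then show ?case by (intro exI[of _ "[]"]) simp
next
  case (Suc n A)
  then have "A \<noteq> {}" by auto
  from Suc.prems(2) this Suc.prems(3) obtain a f where a: "a \<in> A" and f: "f \<in> B2 - B1" "in_fundamental_cut a f"
    and apart: "\<forall>x\<in>A - {a}. endpoints ends f \<inter> subtree x = {}"
    by (rule exists_edge_leaving_disjoint_subtrees)
  have "n = card (A - {a})" using Suc.hyps(2) Suc.prems(1) a by simp
  moreover have "finite (A - {a})" "A - {a} \<subseteq> B1 - B2"
    "\<forall>x\<in>A - {a}. \<forall>x'\<in>A - {a}. x \<noteq> x' \<longrightarrow> subtree x \<inter> subtree x' = {}"
    using Suc.prems by auto
  ultimately obtain ps where ps: "triangular in_fundamental_cut ps"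
    "length ps = card (A - {a})" "set ps \<subseteq> (A - {a}) \<times> (B2 - B1)"
    using Suc.hyps(1) by blast
  have "\<forall>(x, _)\<in>set ps. \<not> in_fundamental_cut x f"
    using ps(3) apart unfolding crosses_iff_endpoints by fastforce
  with f ps(1) have "triangular in_fundamental_cut ((a, f) # ps)" by simp
  moreover have "length ((a, f) # ps) = card A"
    using ps(2) card_Suc_Diff1[OF Suc.prems(1) a] by simp
  moreover have "set ((a, f) # ps) \<subseteq> A \<times> (B2 - B1)" using ps(3) a f(1) by auto
  ultimately show ?case by blast
qed

lemma exists_edge_between_nested_subtrees:
  assumes m: "m \<in> B1 - B2" and m': "m' \<in> B1 - B2" "m' \<noteq> m"
    and nested: "subtree m' \<subseteq> subtree m"
  obtains f where "f \<in> B2 - B1"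
    "in_fundamental_cut m' f \<and> endpoints ends f \<subseteq> subtree m \<or>
     in_fundamental_cut m f \<and> endpoints ends f \<inter> subtree m' = {}"
proof -
  define D where "D = subtree m - subtree m'"
  have mB: "m \<in> B1" "m' \<in> B1" using m m' by auto
  have "far_end m \<notin> subtree m'"
  proof
    assume "far_end m \<in> subtree m'"
    moreover have "near_end m \<notin> subtree m'" using near_end_notin_subtree[OF mB(1)] nested by blast
    ultimately have "crosses ends m (subtree m')"
      using near_far_cases[of m] unfolding crosses_def by auto
    with crosses_subtree_imp_eq[OF mB(1)] m'(2) show False by blast
  qed
  then have "crosses ends m D"
    using far_end_in_subtree[of m] near_end_notin_subtree[OF mB(1)] near_far_cases[of m]
    unfolding D_def crosses_def by auto
  with mB(1) obtain f where f: "f \<in> B2" "crosses ends f D" by (rule B2_edge_crossing)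
  from f(2) obtain u w where uw: "endpoints ends f = {u, w}" "u \<in> D" "w \<notin> D"
    by (rule crossesE)
  show thesis
  proof (cases "w \<in> subtree m")
    case True
    then have cut: "in_fundamental_cut m' f" and "endpoints ends f \<subseteq> subtree m"
      using uw unfolding D_def crosses_iff_endpoints by auto
    moreover have "f \<notin> B1" using crosses_subtree_notin_B1[OF f(1) m'(1) cut] .
    ultimately show thesis using that f(1) by blast
  next
    case False
    then have cut: "in_fundamental_cut m f" and "endpoints ends f \<inter> subtree m' = {}"
      using uw nested unfolding D_def crosses_iff_endpoints by auto
    moreover have "f \<notin> B1" using crosses_subtree_notin_B1[OF f(1) m cut] .
    ultimately show thesis using that f(1) by blast
  qed
qed

text \<open>Invariant of the chain case, built from the bottom of the chain upwards: a new exchange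
  for the current top m is prepended to dl when its edge leaves the subtree of m and misses
  everything below; an exchange for the element below m is appended to ul when its edge stays
  inside the subtree of m.\<close>
definition nested_exchange_lists :: "'e set \<Rightarrow> 'e \<Rightarrow> ('e \<times> 'e) list \<Rightarrow> ('e \<times> 'e) list \<Rightarrow> bool" where
  "nested_exchange_lists C m dl ul \<longleftrightarrow>
    triangular in_fundamental_cut dl \<and> triangular in_fundamental_cut ul \<and>
    set dl \<subseteq> C \<times> (B2 - B1) \<and> set ul \<subseteq> C \<times> (B2 - B1) \<and>
    (\<forall>y\<in>snd ` set ul. endpoints ends y \<subseteq> subtree m)"

lemma nested_exchange_lists_mono:
  assumes "nested_exchange_lists C' m' dl ul" "C' \<subseteq> C" "subtree m' \<subseteq> subtree m"
  shows "nested_exchange_lists C m dl ul"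
proof -
  have "C' \<times> (B2 - B1) \<subseteq> C \<times> (B2 - B1)" using assms(2) by blast
  with assms(1,3) show ?thesis unfolding nested_exchange_lists_def by (meson subset_trans)
qed

lemma nested_exchange_lists_snoc:
  assumes lists: "nested_exchange_lists C' m' dl ul" "C' \<subseteq> C" "subtree m' \<subseteq> subtree m"
    and f: "m' \<in> C" "f \<in> B2 - B1" "in_fundamental_cut m' f" "endpoints ends f \<subseteq> subtree m"
  shows "nested_exchange_lists C m dl (ul @ [(m', f)])"
proof -
  have "\<not> in_fundamental_cut m' y" if "(x, y) \<in> set ul" for x y
  proof -
    have "endpoints ends y \<subseteq> subtree m'"
      using lists(1) that unfolding nested_exchange_lists_def by force
    then show ?thesis unfolding crosses_iff_endpoints by blast
  qed
  then have "triangular in_fundamental_cut (ul @ [(m', f)])"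
    using triangular_snoc[of in_fundamental_cut ul m' f] lists(1) f(3)
    unfolding nested_exchange_lists_def by blast
  with nested_exchange_lists_mono[OF lists] f(1,2,4) show ?thesis
    unfolding nested_exchange_lists_def by auto
qed

lemma nested_exchange_lists_Cons:
  assumes lists: "nested_exchange_lists C' m' dl ul" "C' \<subseteq> C" "subtree m' \<subseteq> subtree m"
    and below: "\<forall>x\<in>C'. subtree x \<subseteq> subtree m'"
    and f: "m \<in> C" "f \<in> B2 - B1" "in_fundamental_cut m f" "endpoints ends f \<inter> subtree m' = {}"
  shows "nested_exchange_lists C m ((m, f) # dl) ul"
proof -
  have "\<not> in_fundamental_cut x f" if "(x, y) \<in> set dl" for x y
  proof -
    have "x \<in> C'" using lists(1) that unfolding nested_exchange_lists_def by blast
    with below f(4) have "endpoints ends f \<inter> subtree x = {}" by blast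
    then show ?thesis unfolding crosses_iff_endpoints by blast
  qed
  then have "triangular in_fundamental_cut ((m, f) # dl)"
    using lists(1) f(3) unfolding nested_exchange_lists_def by auto
  with nested_exchange_lists_mono[OF lists] f(1,2) show ?thesis
    unfolding nested_exchange_lists_def by auto
qed

lemma nested_exchange_lists_exist:
  assumes "finite C" "C \<subseteq> B1 - B2"
    and chain: "\<forall>x\<in>C. \<forall>x'\<in>C. subtree x \<subseteq> subtree x' \<or> subtree x' \<subseteq> subtree x"
    and top: "m \<in> C" "\<forall>x\<in>C. subtree x \<subseteq> subtree m"
  shows "\<exists>dl ul. nested_exchange_lists C m dl ul \<and> card C \<le> length dl + length ul + 1"
  using assms
proof (induction "card C" arbitrary: C m)
  case (Suc n C m)
  define C' where "C' = C - {m}"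
  show ?case
  proof (cases "C' = {}")
    case True
    then have "C = {m}" using Suc.prems(4) unfolding C'_def by blast
    then show ?thesis by (intro exI[of _ "[]"]) (simp add: nested_exchange_lists_def)
  next
    case False
    have C': "finite C'" "C' \<subseteq> B1 - B2"
      "\<forall>x\<in>C'. \<forall>x'\<in>C'. subtree x \<subseteq> subtree x' \<or> subtree x' \<subseteq> subtree x"
      using Suc.prems(1-3) unfolding C'_def by auto
    obtain m' where m': "m' \<in> C'" "\<forall>x\<in>C'. subtree x \<subseteq> subtree m'"
      using finite_chain_has_greatest[OF C'(1) False C'(3)] by blast
    have "n = card C'" using Suc.hyps(2) Suc.prems(1,4) unfolding C'_def by simp
    from Suc.hyps(1)[OF this C' m'] obtain dl ul where
      lists: "nested_exchange_lists C' m' dl ul" and len: "card C' \<le> length dl + length ul + 1"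
      by blast
    have card_C: "card C = Suc (card C')"
      unfolding C'_def using card_Suc_Diff1[OF Suc.prems(1,4)] by simp
    have sub: "C' \<subseteq> C" "subtree m' \<subseteq> subtree m"
      using Suc.prems(5) m'(1) unfolding C'_def by auto
    have "m \<in> B1 - B2" "m' \<in> B1 - B2" "m' \<noteq> m"
      using Suc.prems(2,4) m'(1) unfolding C'_def by auto
    from this sub(2) obtain f where f: "f \<in> B2 - B1"
      "in_fundamental_cut m' f \<and> endpoints ends f \<subseteq> subtree m \<or>
       in_fundamental_cut m f \<and> endpoints ends f \<inter> subtree m' = {}"
      by (rule exists_edge_between_nested_subtrees)
    from f(2) show ?thesis
    proof (elim disjE conjE)
      assume "in_fundamental_cut m' f" "endpoints ends f \<subseteq> subtree m"
      with nested_exchange_lists_snoc[OF lists sub] m'(1) f(1) sub(1)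
      have "nested_exchange_lists C m dl (ul @ [(m', f)])" by blast
      with len card_C show ?thesis by (intro exI[of _ dl] exI[of _ "ul @ [(m', f)]"]) simp
    next
      assume "in_fundamental_cut m f" "endpoints ends f \<inter> subtree m' = {}"
      with nested_exchange_lists_Cons[OF lists sub m'(2)] Suc.prems(4) f(1)
      have "nested_exchange_lists C m ((m, f) # dl) ul" by blast
      with len card_C show ?thesis by (intro exI[of _ "(m, f) # dl"] exI[of _ ul]) simp
    qed
  qed
qed simp

lemma triangular_list_of_incomparable_subtrees:
  assumes "finite A" "A \<subseteq> B1 - B2"
    and incomparable: "\<forall>x\<in>A. \<forall>x'\<in>A. subtree x \<subseteq> subtree x' \<longrightarrow> x = x'"
  shows "\<exists>ps. triangular in_fundamental_cut ps \<and> length ps = card A \<and> set ps \<subseteq> A \<times> (B2 - B1)"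
proof (rule triangular_list_of_disjoint_subtrees[OF assms(1,2)], intro ballI impI)
  fix x x' assume x: "x \<in> A" "x' \<in> A" "x \<noteq> x'"
  then have "\<not> subtree x \<subseteq> subtree x'" "\<not> subtree x' \<subseteq> subtree x"
    using incomparable by blast+
  moreover have "x \<in> B1" "x' \<in> B1" using x assms(2) by auto
  ultimately show "subtree x \<inter> subtree x' = {}" using subtree_laminar by blast
qed

lemma triangular_list_of_nested_subtrees:
  assumes C: "finite C" "C \<subseteq> B1 - B2" "C \<noteq> {}"
    and chain: "\<forall>x\<in>C. \<forall>x'\<in>C. subtree x \<subseteq> subtree x' \<or> subtree x' \<subseteq> subtree x"
  shows "\<exists>ps. triangular in_fundamental_cut ps \<and> card C \<le> 2 * length ps + 1 \<and> set ps \<subseteq> C \<times> (B2 - B1)"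
proof -
  obtain m where m: "m \<in> C" "\<forall>x\<in>C. subtree x \<subseteq> subtree m"
    using finite_chain_has_greatest[OF C(1,3) chain] by blast
  obtain dl ul where lists: "nested_exchange_lists C m dl ul"
    and len: "card C \<le> length dl + length ul + 1"
    using nested_exchange_lists_exist[OF C(1,2) chain m] by blast
  then have dl: "triangular in_fundamental_cut dl" "set dl \<subseteq> C \<times> (B2 - B1)"
    and ul: "triangular in_fundamental_cut ul" "set ul \<subseteq> C \<times> (B2 - B1)"
    unfolding nested_exchange_lists_def by auto
  show ?thesis
  proof (cases "length ul \<le> length dl")
    case True
    with len dl show ?thesis by (intro exI[of _ dl]) simp
  next
    case False
    with len ul show ?thesis by (intro exI[of _ ul]) simp
  qed
qed

lemma triangular_list_exists:
  assumes card: "(2 * k - 1) * k < card (B1 - B2)"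
  shows "\<exists>ps. triangular in_fundamental_cut ps \<and> length ps = k \<and> set ps \<subseteq> (B1 - B2) \<times> (B2 - B1)"
proof -
  define X where "X = B1 - B2"
  have fin: "finite X" unfolding X_def using finite_subset[OF B1_subset finite_E] by blast
  have inj: "inj_on subtree X" unfolding X_def using inj_on_subtree by (rule inj_on_subset) blast
  have "(2 * k - 1) * k < card (subtree ` X)"
    using card card_image[OF inj] unfolding X_def by simp
  from mirsky_antichain_or_chain[OF finite_imageI[OF fin] this]
  have "\<exists>ps. triangular in_fundamental_cut ps \<and> k \<le> length ps \<and> set ps \<subseteq> X \<times> (B2 - B1)"
  proof (elim disjE exE conjE)
    fix A' assume A': "A' \<subseteq> subtree ` X" "k \<le> card A'" "\<forall>a\<in>A'. \<forall>b\<in>A'. a \<subseteq> b \<longrightarrow> a = b"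
    then obtain A where A: "A \<subseteq> X" "A' = subtree ` A" by (auto simp: subset_image_iff)
    have "card A = card A'" using card_image[OF inj_on_subset[OF inj A(1)]] A(2) by simp
    have incomparable: "\<forall>x\<in>A. \<forall>x'\<in>A. subtree x \<subseteq> subtree x' \<longrightarrow> x = x'"
    proof (intro ballI impI)
      fix x x' assume "x \<in> A" "x' \<in> A" "subtree x \<subseteq> subtree x'"
      with A A'(3) have "subtree x = subtree x'" by blast
      with inj \<open>x \<in> A\<close> \<open>x' \<in> A\<close> A(1) show "x = x'" by (meson inj_onD subsetD)
    qed
    obtain ps where ps: "triangular in_fundamental_cut ps" "length ps = card A"
      "set ps \<subseteq> A \<times> (B2 - B1)"
      using triangular_list_of_incomparable_subtrees[OF finite_subset[OF A(1) fin] _ incomparable] A(1)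
      unfolding X_def by blast
    with A(1) A'(2) \<open>card A = card A'\<close> show ?thesis by (intro exI[of _ ps]) auto
  next
    fix C' assume C': "C' \<subseteq> subtree ` X" "card C' = Suc (2 * k - 1)"
      "\<forall>a\<in>C'. \<forall>b\<in>C'. a \<le> b \<or> b \<le> a"
    then obtain C where C: "C \<subseteq> X" "C' = subtree ` C" by (auto simp: subset_image_iff)
    have "card C = card C'" using card_image[OF inj_on_subset[OF inj C(1)]] C(2) by simp
    then have card_C: "2 * k \<le> card C" "C \<noteq> {}" using C'(2) by auto
    have chain: "\<forall>x\<in>C. \<forall>x'\<in>C. subtree x \<subseteq> subtree x' \<or> subtree x' \<subseteq> subtree x"
      using C C'(3) by blast
    obtain ps where ps: "triangular in_fundamental_cut ps" "card C \<le> 2 * length ps + 1"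
      "set ps \<subseteq> C \<times> (B2 - B1)"
      using triangular_list_of_nested_subtrees[OF finite_subset[OF C(1) fin] _ card_C(2) chain] C(1)
      unfolding X_def by blast
    from card_C(1) ps(2) have "k \<le> length ps" by linarith
    with ps(1,3) C(1) show ?thesis by (intro exI[of _ ps]) auto
  qed
  then obtain ps where ps: "triangular in_fundamental_cut ps" "k \<le> length ps" "set ps \<subseteq> X \<times> (B2 - B1)"
    by blast
  have "triangular in_fundamental_cut (take k ps)" using triangular_take[OF ps(1)] .
  moreover have "length (take k ps) = k" using ps(2) by simp
  moreover have "set (take k ps) \<subseteq> X \<times> (B2 - B1)" using ps(3) set_take_subset by fastforce
  ultimately show ?thesis unfolding X_def by blast
qed

lemma elementary_exchange_of_triangular:
  assumes tri: "triangular in_fundamental_cut ps" and ps: "set ps \<subseteq> (B1 - B2) \<times> (B2 - B1)"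
  shows "elementary_exchange (graphic_base E ends) (length ps) B1 B2"
proof -
  define X where "X = fst ` set ps"
  define Y where "Y = snd ` set ps"
  have dist: "distinct (map fst ps)" "distinct (map snd ps)"
    using triangular_distinct[OF tri] by auto
  then have inj: "inj_on fst (set ps)" "inj_on snd (set ps)"
    by (simp_all add: distinct_map)
  define \<phi> where "\<phi> = snd \<circ> inv_into (set ps) fst"
  have bij: "bij_betw \<phi> X Y"
    unfolding \<phi>_def X_def Y_def
    by (rule bij_betw_trans[OF bij_betw_inv_into inj_on_imp_bij_betw])
      (use inj in \<open>simp_all add: inj_on_imp_bij_betw\<close>)
  have \<phi>: "\<forall>(x, y)\<in>set ps. \<phi> x = y"
    unfolding \<phi>_def using inv_into_f_eq[OF inj(1)] by fastforce
  have "triangular in_fundamental_cut ps = triangular (\<lambda>x y. crosses ends y (side ends B1 x)) ps"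
  proof (rule triangular_cong, rule crosses_subtree_iff_crosses_side)
    fix x y assume "x \<in> fst ` set ps" "y \<in> snd ` set ps"
    then show "x \<in> B1" "connected_by ends B1 (fst (ends y)) (snd (ends y))"
      using graphic_base_connected[OF base1] ps B2_subset by auto
  qed
  with tri have tri_side: "triangular (\<lambda>x y. crosses ends y (side ends B1 x)) ps" by simp
  have "set ps \<subseteq> B1 \<times> (E - B1)" using ps B2_subset by auto
  from graphic_base_triangular_exchange[OF base1 tri_side this \<phi>]
  have exchange: "graphic_base E ends (B1 - Z \<union> \<phi> ` Z)" if "Z \<subseteq> X" for Z
    using that unfolding X_def .
  have "card X = length ps" "card Y = length ps"
    unfolding X_def Y_def using distinct_card[OF dist(1)] distinct_card[OF dist(2)] by simp_all
  moreover have "X \<subseteq> B1 - B2" "Y \<subseteq> B2 - B1" "finite X" "finite Y"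
    using ps unfolding X_def Y_def by auto
  ultimately show ?thesis
    unfolding elementary_exchange_def using bij exchange by blast
qed

end

lemma cubic_bound: "1 \<le> (k::nat) \<Longrightarrow> (2 * k - 1) * k < 3 * k ^ 3"
proof -
  assume k: "1 \<le> k"
  have "(2 * k - 1) * k < 2 * k * k" using k by simp
  also have "\<dots> \<le> 3 * (k * k * k)" using k by simp
  finally show ?thesis by (simp add: power3_eq_cube)
qed

theorem theorem5p24:
  fixes E :: "'e set" and ends :: "'e \<Rightarrow> 'v \<times> 'v" and k :: nat
  assumes "finite E" and "k \<ge> 1"
  shows "elem_weakly_base_orderable (graphic_base E ends) (3 * k ^ 3) k"
  unfolding elem_weakly_base_orderable_def
proof (intro allI impI)
  fix B1 B2
  assume "graphic_base E ends B1" "graphic_base E ends B2" and card: "3 * k ^ 3 \<le> card (B1 - B2)"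
  then interpret graphic_base_pair ends E B1 B2
    using assms(1) by unfold_locales
  have "(2 * k - 1) * k < card (B1 - B2)" using card cubic_bound[OF assms(2)] by linarith
  then obtain ps where
    "triangular in_fundamental_cut ps" "length ps = k" "set ps \<subseteq> (B1 - B2) \<times> (B2 - B1)"
    using triangular_list_exists by blast
  then show "elementary_exchange (graphic_base E ends) k B1 B2"
    using elementary_exchange_of_triangular by blast
qed

end
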